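(* Let $n$ be the number of validators and $f\in[0,n]$. Suppose (A) the algorithm by which validators cast FFG-votes guarantees, for every validator following it: at most one FFG-vote is sent in any slot; the target $\mathcal{T}$ of the FFG-vote sent in slot $t$ has $\mathcal{T}.c=t$; and if $\mathcal{S},\mathcal{S}'$ are the sources of FFG-votes sent in slots $t\le t'$ then $\mathcal{S}\le\mathcal{S}'$; and (B) for every round $r$ and every validator $v_i$ honest in round $r$, the chain $\chi^{\mathrm{fin}}_i$ output by $v_i$ at round $r$ is a chain finalized according to the global view $\mathcal{V}^r_{\mathsf{G}}$ (the set of all messages sent up to round $r$). Then the finalized chain $\chi^{\mathrm{fin}}$ is $\frac{n}{3}$-accountable.
   Context: Validators $v_1,\dots,v_n$ exchange signed messages; time is divided into rounds grouped into slots. A validator is honest until it is (possibly) corrupted by the adversary, after which it may deviate arbitrarily; honest validators follow the protocol. Blocks are pairs $(b,p)$ with $p$ the slot; chains are identified with their last block, $\chi.p$ is the slot of the last block; genesis $B_{\text{genesis}}$ has slot $-1$; $\preceq$ is the prefix relation and chains conflict if neither is a prefix of the other. Checkpoints $\mathcal{C}=(\chi,c)$; FFG-vote $\mathcal{C}_1\to\mathcal{C}_2$ valid iff $\mathcal{C}_1.c<\mathcal{C}_2.c$ and $\mathcal{C}_1.\chi\preceq\mathcal{C}_2.\chi$; FFG-votes are carried inside VOTE messages. In a view (set of messages) $\mathcal{V}$: $\mathcal{C}$ is justified iff $\mathcal{C}=(B_{\text{genesis}},0)$ or there are VOTE messages in $\mathcal{V}$ from at least $\frac{2}{3}n$ distinct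 validators whose FFG-votes $\mathcal{S}\to\mathcal{T}$ are valid, with $\mathcal{S}$ justified in $\mathcal{V}$, $\mathcal{S}.\chi\preceq\mathcal{C}.\chi\preceq\mathcal{T}.\chi$, $\mathcal{T}.c=\mathcal{C}.c$; $\mathcal{C}$ is finalized iff $\mathcal{C}=(B_{\text{genesis}},0)$ or $\mathcal{C}$ is justified and there are VOTE messages in $\mathcal{V}$ from at least $\frac{2}{3}n$ distinct validators with valid FFG-votes $\mathcal{C}\to\mathcal{T}$, $\mathcal{T}.c=\mathcal{C}.c+1$. A chain is finalized according to $\mathcal{V}$ iff it is a prefix of the chain of a checkpoint finalized in $\mathcal{V}$. Preorder: $\mathcal{C}\le\mathcal{C}'$ iff $\mathcal{C}.c<\mathcal{C}'.c$ or ($\mathcal{C}.c=\mathcal{C}'.c$ and $\mathcal{C}.\chi.p\le\mathcal{C}'.\chi.p$); $<$ is its strict part. Slashing conditions for two distinct FFG-votes $\mathcal{C}_1\to\mathcal{C}_2$, $\mathcal{C}_3\to\mathcal{C}_4$ by the same validator: $\mathbf{E_1}$: $\mathcal{C}_2.c=\mathcal{C}_4.c$; $\mathbf{E_2}$: $\mathcal{C}_3<\mathcal{C}_1$ and $\mathcal{C}_2.c<\mathcal{C}_4.c$. Accountability: a protocol outputting chain $\chi^{\mathrm{fin}}$ is $f^{\mathrm{acc}}$-accountable if, whenever safety is violated (two validators, honest at rounds $r,r'$ respectively, output chains $\chi^{\mathrm{fin},r}_i$, $\chi^{\mathrm{fin},r'}_j$ that conflict), then, having access to all messages sent, it is possible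 to produce a proof identifying at least $f^{\mathrm{acc}}$ validators as protocol violators, and such a proof can never falsely accuse an honest validator that followed the protocol. *)

theory Defs
  imports Complex_Main "HOL-Library.Sublist"
begin

text \<open>A block is a pair (b,p) with p its slot; the genesis block has slot -1.
  A chain is identified with the sequence of blocks from genesis to its last block;
  (valid) chains start at genesis and slots strictly increase along the chain.\<close>

datatype 'b block = Genesis | Block 'b int

fun bslot :: "'b block \<Rightarrow> int" where
  "bslot Genesis = -1"
| "bslot (Block b p) = p"

definition valid_chain :: "'b block list \<Rightarrow> bool" where
  "valid_chain xs \<longleftrightarrow> xs \<noteq> [] \<and> hd xs = Genesis \<and> sorted_wrt (\<lambda>x y. bslot x < bslot y) xs"

typedef 'b chain = "{xs :: 'b block list. valid_chain xs}" morphisms blocks Abs_chain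
  by (rule exI[of _ "[Genesis]"]) (simp add: valid_chain_def)

definition genesis_chain :: "'b chain" where
  "genesis_chain = Abs_chain [Genesis]"

definition cslot :: "'b chain \<Rightarrow> int" where
  "cslot ch = bslot (last (blocks ch))"

definition chain_prefix :: "'b chain \<Rightarrow> 'b chain \<Rightarrow> bool" (infix "\<preceq>\<^sub>c" 50) where
  "ch \<preceq>\<^sub>c ch' \<longleftrightarrow> prefix (blocks ch) (blocks ch')"

definition conflicting :: "'b chain \<Rightarrow> 'b chain \<Rightarrow> bool" where
  "conflicting ch ch' \<longleftrightarrow> \<not> ch \<preceq>\<^sub>c ch' \<and> \<not> ch' \<preceq>\<^sub>c ch"

type_synonym 'b checkpoint = "'b chain \<times> int"

type_synonym 'b ffg_vote = "'b checkpoint \<times> 'b checkpoint"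

definition valid_ffg :: "'b ffg_vote \<Rightarrow> bool" where
  "valid_ffg F \<longleftrightarrow> snd (fst F) < snd (snd F) \<and> fst (fst F) \<preceq>\<^sub>c fst (snd F)"

datatype ('v, 'b, 'x) message = VOTE 'v "'b ffg_vote" 'x | OTHER 'v 'x

section \<open>Justification and finalization (validators = the finite type 'v, n = card (UNIV :: 'v set))\<close>

inductive justified :: "('v::finite, 'b, 'x) message set \<Rightarrow> 'b checkpoint \<Rightarrow> bool"
  for V :: "('v, 'b, 'x) message set" where
  genesis: "justified V (genesis_chain, 0)"
| votes: "\<lbrakk> real (card W) \<ge> 2 * real (card (UNIV :: 'v set)) / 3;
            \<forall>v\<in>W. \<exists>S T x. VOTE v (S, T) x \<in> V \<and> valid_ffg (S, T) \<and> justified V S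
                    \<and> fst S \<preceq>\<^sub>c fst C \<and> fst C \<preceq>\<^sub>c fst T \<and> snd T = snd C \<rbrakk>
          \<Longrightarrow> justified V C"

definition finalized :: "('v::finite, 'b, 'x) message set \<Rightarrow> 'b checkpoint \<Rightarrow> bool" where
  "finalized V C \<longleftrightarrow> C = (genesis_chain, 0) \<or>
     (justified V C \<and>
      (\<exists>W :: 'v set. real (card W) \<ge> 2 * real (card (UNIV :: 'v set)) / 3 \<and>
         (\<forall>v\<in>W. \<exists>T x. VOTE v (C, T) x \<in> V \<and> valid_ffg (C, T) \<and> snd T = snd C + 1)))"

definition finalized_chain :: "('v::finite, 'b, 'x) message set \<Rightarrow> 'b chain \<Rightarrow> bool" where
  "finalized_chain V ch \<longleftrightarrow> (\<exists>C. finalized V C \<and> ch \<preceq>\<^sub>c fst C)"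

definition cp_le :: "'b checkpoint \<Rightarrow> 'b checkpoint \<Rightarrow> bool" where
  "cp_le C C' \<longleftrightarrow> snd C < snd C' \<or> (snd C = snd C' \<and> cslot (fst C) \<le> cslot (fst C'))"

definition cp_less :: "'b checkpoint \<Rightarrow> 'b checkpoint \<Rightarrow> bool" where
  "cp_less C C' \<longleftrightarrow> cp_le C C' \<and> \<not> cp_le C' C"

text \<open>Two distinct FFG votes C1->C2 and C3->C4 (of the same validator) violate E1 or E2.\<close>
definition slashable :: "'b ffg_vote \<Rightarrow> 'b ffg_vote \<Rightarrow> bool" where
  "slashable F F' \<longleftrightarrow> F \<noteq> F' \<and>
     (snd (snd F) = snd (snd F')
      \<or> (cp_less (fst F') (fst F) \<and> snd (snd F) < snd (snd F')))"

definition slashing_evidence :: "('v, 'b, 'x) message set \<Rightarrow> 'v \<Rightarrow> bool" where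
  "slashing_evidence M v \<longleftrightarrow>
     (\<exists>F F' x x'. VOTE v F x \<in> M \<and> VOTE v F' x' \<in> M \<and> slashable F F')"

text \<open>An execution: sent r = messages sent in round r; honest r v = v honest in round r;
  output r v = chain chi^fin output by v at round r; slot_of r = slot of round r.\<close>

definition global_view :: "(nat \<Rightarrow> ('v, 'b, 'x) message set) \<Rightarrow> nat \<Rightarrow> ('v, 'b, 'x) message set" where
  "global_view sent r = (\<Union>r'\<in>{..r}. sent r')"

definition all_msgs :: "(nat \<Rightarrow> ('v, 'b, 'x) message set) \<Rightarrow> ('v, 'b, 'x) message set" where
  "all_msgs sent = (\<Union>r. sent r)"

definition honest_ffg_vote ::
  "(nat \<Rightarrow> ('v, 'b, 'x) message set) \<Rightarrow> (nat \<Rightarrow> 'v \<Rightarrow> bool) \<Rightarrow> 'v \<Rightarrow> nat \<Rightarrow> 'b ffg_vote \<Rightarrow> bool" where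
  "honest_ffg_vote sent honest v r F \<longleftrightarrow> honest r v \<and> (\<exists>x. VOTE v F x \<in> sent r)"

definition ffg_voting_rule ::
  "(nat \<Rightarrow> ('v, 'b, 'x) message set) \<Rightarrow> (nat \<Rightarrow> 'v \<Rightarrow> bool) \<Rightarrow> (nat \<Rightarrow> int) \<Rightarrow> bool" where
  "ffg_voting_rule sent honest slot_of \<longleftrightarrow>
     (\<forall>v r r' F F'. honest_ffg_vote sent honest v r F \<longrightarrow> honest_ffg_vote sent honest v r' F' \<longrightarrow>
         slot_of r = slot_of r' \<longrightarrow> F = F')
   \<and> (\<forall>v r F. honest_ffg_vote sent honest v r F \<longrightarrow> snd (snd F) = slot_of r)
   \<and> (\<forall>v r r' F F'. honest_ffg_vote sent honest v r F \<longrightarrow> honest_ffg_vote sent honest v r' F' \<longrightarrow>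
         slot_of r \<le> slot_of r' \<longrightarrow> cp_le (fst F) (fst F'))"

definition outputs_finalized ::
  "(nat \<Rightarrow> ('v::finite, 'b, 'x) message set) \<Rightarrow> (nat \<Rightarrow> 'v \<Rightarrow> bool) \<Rightarrow> (nat \<Rightarrow> 'v \<Rightarrow> 'b chain) \<Rightarrow> bool" where
  "outputs_finalized sent honest output \<longleftrightarrow>
     (\<forall>r v. honest r v \<longrightarrow> finalized_chain (global_view sent r) (output r v))"

definition safety_violation ::
  "(nat \<Rightarrow> 'v \<Rightarrow> bool) \<Rightarrow> (nat \<Rightarrow> 'v \<Rightarrow> 'b chain) \<Rightarrow> bool" where
  "safety_violation honest output \<longleftrightarrow>
     (\<exists>r r' i j. honest r i \<and> honest r' j \<and> conflicting (output r i) (output r' j))"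

definition accountable ::
  "(nat \<Rightarrow> ('v, 'b, 'x) message set) \<Rightarrow> (nat \<Rightarrow> 'v \<Rightarrow> bool) \<Rightarrow> (nat \<Rightarrow> 'v \<Rightarrow> 'b chain) \<Rightarrow> real \<Rightarrow> bool" where
  "accountable sent honest output f \<longleftrightarrow>
     (safety_violation honest output \<longrightarrow>
        (\<exists>D. real (card D) \<ge> f \<and> (\<forall>v\<in>D. slashing_evidence (all_msgs sent) v)))
   \<and> (\<forall>v. slashing_evidence (all_msgs sent) v \<longrightarrow> \<not> (\<forall>r. honest r v))"

end

theory Submission
  imports Defs
begin

text \<open>Suppose fewer than n/3 validators can be shown to have violated E1 or E2. Then any two
  quorums (sets of at least 2n/3 validators) share a validator against whom there is no
  evidence. Two justified checkpoints of the same epoch cannot conflict: such a shared validator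
  would have cast two different votes with the same target epoch (E1). If C1 is finalized, every
  justified checkpoint C of larger epoch extends C1, by induction on the justification of C: a
  shared validator of the finalizing quorum of C1 and the justifying quorum of C votes
  C1 \<rightarrow> T' with T'.c = C1.c + 1 and S \<rightarrow> T with T.c = C.c, so E2 forces C1 \<le> S, and the
  induction hypothesis (or the equal epoch case) for the justified source S gives
  C1.\<chi> \<preceq> S.\<chi> \<preceq> C.\<chi>. Hence finalized chains never conflict. Conversely a validator following
  rule (A) sends one vote per slot targeting that slot, with sources monotone in the slot, so it
  never violates E1 or E2.\<close>

lemma chain_prefix_refl [simp]: "ch \<preceq>\<^sub>c ch"
  unfolding chain_prefix_def by simp

lemma chain_prefix_trans: "a \<preceq>\<^sub>c b \<Longrightarrow> b \<preceq>\<^sub>c c \<Longrightarrow> a \<preceq>\<^sub>c c"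
  unfolding chain_prefix_def using prefix_order.trans by blast

lemma chain_prefix_same_cases: "a \<preceq>\<^sub>c c \<Longrightarrow> b \<preceq>\<^sub>c c \<Longrightarrow> a \<preceq>\<^sub>c b \<or> b \<preceq>\<^sub>c a"
  unfolding chain_prefix_def using prefix_same_cases by blast

lemma genesis_chain_prefix: "genesis_chain \<preceq>\<^sub>c ch"
proof -
  have genesis_blocks: "blocks (genesis_chain :: 'b chain) = [Genesis]"
    unfolding genesis_chain_def by (rule Abs_chain_inverse) (simp add: valid_chain_def)
  have "valid_chain (blocks ch)"
    using blocks by blast
  then obtain bs where "blocks ch = Genesis # bs"
    unfolding valid_chain_def by (cases "blocks ch") auto
  then show ?thesis
    unfolding chain_prefix_def genesis_blocks by simp
qed

lemma cslot_less_if_strict_prefix: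
  assumes "a \<preceq>\<^sub>c b" and "a \<noteq> b"
  shows "cslot a < cslot b"
proof -
  obtain bs where b_blocks: "blocks b = blocks a @ bs"
    using assms(1) unfolding chain_prefix_def prefix_def by blast
  have "bs \<noteq> []"
    using b_blocks assms(2) blocks_inject by fastforce
  have "blocks a \<noteq> []" and "sorted_wrt (\<lambda>x y. bslot x < bslot y) (blocks a @ bs)"
    using blocks[of a] blocks[of b] b_blocks unfolding valid_chain_def by auto
  then have "bslot (last (blocks a)) < bslot (last bs)"
    using \<open>bs \<noteq> []\<close> unfolding sorted_wrt_append by simp
  then show ?thesis
    unfolding cslot_def b_blocks using \<open>bs \<noteq> []\<close> by simp
qed

lemma conflicting_extend:
  assumes "conflicting a b" and "a \<preceq>\<^sub>c a'" and "b \<preceq>\<^sub>c b'"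
  shows "conflicting a' b'"
  using assms chain_prefix_same_cases chain_prefix_trans unfolding conflicting_def by metis

lemma conflicting_not_genesis: "conflicting a b \<Longrightarrow> a \<noteq> genesis_chain \<and> b \<noteq> genesis_chain"
  using genesis_chain_prefix unfolding conflicting_def by blast

lemma cp_less_iff:
  "cp_less C C' \<longleftrightarrow> snd C < snd C' \<or> (snd C = snd C' \<and> cslot (fst C) < cslot (fst C'))"
  unfolding cp_less_def cp_le_def by auto

abbreviation quorum :: "'v::finite set \<Rightarrow> bool" where
  "quorum W \<equiv> real (card W) \<ge> 2 * real (card (UNIV :: 'v set)) / 3"

definition third_slashable :: "('v::finite, 'b, 'x) message set \<Rightarrow> bool" where
  "third_slashable M \<longleftrightarrow>
     (\<exists>D. real (card D) \<ge> real (card (UNIV :: 'v set)) / 3 \<and> (\<forall>v\<in>D. slashing_evidence M v))"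

lemma quorum_Int_card:
  fixes W1 W2 :: "'v::finite set"
  assumes "quorum W1" and "quorum W2"
  shows "real (card (W1 \<inter> W2)) \<ge> real (card (UNIV :: 'v set)) / 3"
proof -
  have "card W1 + card W2 = card (W1 \<union> W2) + card (W1 \<inter> W2)"
    by (rule card_Un_Int) auto
  moreover have "card (W1 \<union> W2) \<le> card (UNIV :: 'v set)"
    by (rule card_mono) auto
  ultimately show ?thesis
    using assms by linarith
qed

lemma quorums_share_unslashed:
  fixes M :: "('v::finite, 'b, 'x) message set"
  assumes "\<not> third_slashable M" and "quorum W1" and "quorum W2"
  obtains v where "v \<in> W1" and "v \<in> W2" and "\<not> slashing_evidence M v"
  using assms quorum_Int_card[of W1 W2] unfolding third_slashable_def by blast

lemma quorum_nonempty:
  fixes W :: "'v::finite set"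
  assumes "quorum W"
  shows "W \<noteq> {}"
proof -
  have "0 < card (UNIV :: 'v set)"
    by (simp add: finite_UNIV_card_ge_0)
  with assms show ?thesis
    by auto
qed

lemma justified_epoch_nonneg: "justified M C \<Longrightarrow> snd C \<ge> 0"
proof (induction rule: justified.induct)
  case genesis
  then show ?case by simp
next
  case (votes W C)
  then obtain v where "v \<in> W"
    using quorum_nonempty by blast
  with votes.IH obtain S T x where "VOTE v (S, T) x \<in> M" "valid_ffg (S, T)" "0 \<le> snd S"
      "snd T = snd C"
    by blast
  then show ?case
    unfolding valid_ffg_def by simp
qed

lemma justified_mono:
  assumes "M \<subseteq> M'"
  shows "justified M C \<Longrightarrow> justified M' C"
proof (induction rule: justified.induct)
  case genesis
  show ?case by (rule justified.genesis)
next
  case (votes W C)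
  then show ?case
    using assms by (intro justified.votes[of W]) blast+
qed

lemma justified_quorumE:
  assumes "justified M C" and "C \<noteq> (genesis_chain, 0)"
  obtains W where "quorum W"
    and "\<forall>v\<in>W. \<exists>S T x. VOTE v (S, T) x \<in> M \<and> valid_ffg (S, T) \<and> justified M S
           \<and> fst S \<preceq>\<^sub>c fst C \<and> fst C \<preceq>\<^sub>c fst T \<and> snd T = snd C"
  using assms by (cases rule: justified.cases) auto

lemma finalized_imp_justified: "finalized M C \<Longrightarrow> justified M C"
  unfolding finalized_def using justified.genesis by blast

lemma finalized_mono:
  assumes "finalized M C" and "M \<subseteq> M'"
  shows "finalized M' C"
proof (cases "C = (genesis_chain, 0)")
  case True
  then show ?thesis unfolding finalized_def ..
next
  case False
  then obtain W where "justified M C" "quorum W"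
    and "\<forall>v\<in>W. \<exists>T x. VOTE v (C, T) x \<in> M \<and> valid_ffg (C, T) \<and> snd T = snd C + 1"
    using assms(1) unfolding finalized_def by blast
  then show ?thesis
    using justified_mono[OF assms(2)] assms(2) unfolding finalized_def by blast
qed

lemma finalized_chain_mono: "finalized_chain M ch \<Longrightarrow> M \<subseteq> M' \<Longrightarrow> finalized_chain M' ch"
  unfolding finalized_chain_def by (meson finalized_mono)

lemma justified_same_epoch_not_conflicting:
  assumes "\<not> third_slashable M" and "justified M A" and "justified M B" and "snd A = snd B"
  shows "\<not> conflicting (fst A) (fst B)"
proof
  assume conflict: "conflicting (fst A) (fst B)"
  then have "A \<noteq> (genesis_chain, 0)" and "B \<noteq> (genesis_chain, 0)"
    using conflicting_not_genesis by (metis fst_conv)+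
  obtain WA where "quorum WA"
    and WA: "\<forall>v\<in>WA. \<exists>S T x. VOTE v (S, T) x \<in> M \<and> valid_ffg (S, T) \<and> justified M S
               \<and> fst S \<preceq>\<^sub>c fst A \<and> fst A \<preceq>\<^sub>c fst T \<and> snd T = snd A"
    using assms(2) \<open>A \<noteq> (genesis_chain, 0)\<close> by (rule justified_quorumE)
  obtain WB where "quorum WB"
    and WB: "\<forall>v\<in>WB. \<exists>S T x. VOTE v (S, T) x \<in> M \<and> valid_ffg (S, T) \<and> justified M S
               \<and> fst S \<preceq>\<^sub>c fst B \<and> fst B \<preceq>\<^sub>c fst T \<and> snd T = snd B"
    using assms(3) \<open>B \<noteq> (genesis_chain, 0)\<close> by (rule justified_quorumE)
  obtain v where "v \<in> WA" "v \<in> WB" and unslashed: "\<not> slashing_evidence M v"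
    using assms(1) \<open>quorum WA\<close> \<open>quorum WB\<close> by (rule quorums_share_unslashed)
  then obtain S T x S' T' x' where
    "VOTE v (S, T) x \<in> M" "fst A \<preceq>\<^sub>c fst T" "snd T = snd A"
    "VOTE v (S', T') x' \<in> M" "fst B \<preceq>\<^sub>c fst T'" "snd T' = snd B"
    using WA WB by blast
  moreover have "T \<noteq> T'"
    using calculation conflict chain_prefix_same_cases unfolding conflicting_def by blast
  ultimately have "slashable (S, T) (S', T')"
    using assms(4) unfolding slashable_def by simp
  then have "slashing_evidence M v"
    using \<open>VOTE v (S, T) x \<in> M\<close> \<open>VOTE v (S', T') x' \<in> M\<close>
    unfolding slashing_evidence_def by blast
  with unslashed show False ..
qed

lemma justified_extends_finalized:
  assumes "\<not> third_slashable M" and "finalized M C1"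
  shows "justified M C \<Longrightarrow> snd C1 < snd C \<Longrightarrow> fst C1 \<preceq>\<^sub>c fst C"
proof (induction rule: justified.induct)
  case genesis
  then show ?case
    using justified_epoch_nonneg[OF finalized_imp_justified[OF assms(2)]] by simp
next
  case (votes W C)
  show ?case
  proof (cases "C1 = (genesis_chain, 0)")
    case True
    then show ?thesis using genesis_chain_prefix by simp
  next
    case False
    then obtain W1 where "quorum W1"
      and W1: "\<forall>v\<in>W1. \<exists>T x. VOTE v (C1, T) x \<in> M \<and> snd T = snd C1 + 1"
      using assms(2) unfolding finalized_def by blast
    then obtain v where "v \<in> W1" "v \<in> W" and unslashed: "\<not> slashing_evidence M v"
      using assms(1) votes.hyps quorums_share_unslashed by blast
    then obtain S T x T' x' where
      vote: "VOTE v (S, T) x \<in> M" "valid_ffg (S, T)" "justified M S"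
        "fst S \<preceq>\<^sub>c fst C" "fst C \<preceq>\<^sub>c fst T" "snd T = snd C"
      and IH: "snd C1 < snd S \<Longrightarrow> fst C1 \<preceq>\<^sub>c fst S"
      and vote1: "VOTE v (C1, T') x' \<in> M" "snd T' = snd C1 + 1"
      using votes.IH W1 by blast
    have "\<not> slashable (C1, T') (S, T)"
      using vote vote1 unslashed unfolding slashing_evidence_def by blast
    moreover have "snd T' \<le> snd T"
      using vote(6) vote1(2) votes.prems by simp
    ultimately have "\<not> cp_less S C1"
      unfolding slashable_def cp_less_iff by auto
    then consider "snd C1 < snd S" | "snd S = snd C1" "cslot (fst C1) \<le> cslot (fst S)"
      unfolding cp_less_iff by force
    then have "fst C1 \<preceq>\<^sub>c fst S"
    proof cases
      case 1
      then show ?thesis by (rule IH)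
    next
      case 2
      then have "\<not> conflicting (fst S) (fst C1)"
        using justified_same_epoch_not_conflicting[OF assms(1) vote(3)
            finalized_imp_justified[OF assms(2)]] by simp
      then have "fst S \<preceq>\<^sub>c fst C1 \<or> fst C1 \<preceq>\<^sub>c fst S"
        unfolding conflicting_def by blast
      moreover have "\<not> (fst S \<preceq>\<^sub>c fst C1 \<and> fst S \<noteq> fst C1)"
        using 2(2) cslot_less_if_strict_prefix by fastforce
      ultimately show ?thesis
        by auto
    qed
    then show ?thesis
      using vote(4) chain_prefix_trans by blast
  qed
qed

lemma finalized_not_conflicting:
  assumes "\<not> third_slashable M" and "finalized M C1" and "finalized M C2"
  shows "\<not> conflicting (fst C1) (fst C2)"
proof -
  have "justified M C1" and "justified M C2"
    using assms(2,3) finalized_imp_justified by blast+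
  consider "snd C1 = snd C2" | "snd C1 < snd C2" | "snd C2 < snd C1"
    by linarith
  then show ?thesis
  proof cases
    case 1
    then show ?thesis
      using assms(1) \<open>justified M C1\<close> \<open>justified M C2\<close> justified_same_epoch_not_conflicting
      by blast
  next
    case 2
    then show ?thesis
      using justified_extends_finalized[OF assms(1,2) \<open>justified M C2\<close>]
      unfolding conflicting_def by blast
  next
    case 3
    then show ?thesis
      using justified_extends_finalized[OF assms(1,3) \<open>justified M C1\<close>]
      unfolding conflicting_def by blast
  qed
qed

lemma finalized_chains_not_conflicting:
  assumes "\<not> third_slashable M" and "finalized_chain M ch1" and "finalized_chain M ch2"
  shows "\<not> conflicting ch1 ch2"
proof
  assume "conflicting ch1 ch2"
  obtain C1 C2 where "finalized M C1" "ch1 \<preceq>\<^sub>c fst C1" "finalized M C2" "ch2 \<preceq>\<^sub>c fst C2"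
    using assms(2,3) unfolding finalized_chain_def by blast
  then show False
    using \<open>conflicting ch1 ch2\<close> conflicting_extend finalized_not_conflicting[OF assms(1)] by blast
qed

lemma ffg_voting_rule_not_slashable:
  assumes rule: "ffg_voting_rule sent honest slot_of" and always_honest: "\<forall>r. honest r v"
  shows "\<not> slashing_evidence (all_msgs sent) v"
proof
  assume "slashing_evidence (all_msgs sent) v"
  then obtain F F' r r' where "slashable F F'"
    and votes: "honest_ffg_vote sent honest v r F" "honest_ffg_vote sent honest v r' F'"
    using always_honest unfolding slashing_evidence_def all_msgs_def honest_ffg_vote_def by blast
  have one_per_slot: "slot_of r = slot_of r' \<Longrightarrow> F = F'"
    and targets: "snd (snd F) = slot_of r" "snd (snd F') = slot_of r'"
    and monotone_sources: "slot_of r \<le> slot_of r' \<Longrightarrow> cp_le (fst F) (fst F')"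
    using rule votes unfolding ffg_voting_rule_def by blast+
  show False
    using \<open>slashable F F'\<close> one_per_slot targets monotone_sources
    unfolding slashable_def cp_less_def by auto
qed

theorem theorem4p4:
  fixes sent :: "nat \<Rightarrow> ('v::finite, 'b, 'x) message set"
    and honest :: "nat \<Rightarrow> 'v \<Rightarrow> bool"
    and outp :: "nat \<Rightarrow> 'v \<Rightarrow> 'b chain"
    and slot_of :: "nat \<Rightarrow> int"
  assumes "mono slot_of"
    and "\<forall>r v. honest (Suc r) v \<longrightarrow> honest r v"
    and "ffg_voting_rule sent honest slot_of"
    and "outputs_finalized sent honest outp"
  shows "accountable sent honest outp (real (card (UNIV :: 'v set)) / 3)"
proof -
  have "third_slashable (all_msgs sent)" if violation: "safety_violation honest outp"
  proof (rule ccontr)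
    assume unslashable: "\<not> third_slashable (all_msgs sent)"
    obtain r r' i j where "honest r i" "honest r' j" "conflicting (outp r i) (outp r' j)"
      using violation unfolding safety_violation_def by blast
    moreover have "finalized_chain (all_msgs sent) (outp r v)" if "honest r v" for r v
      using assms(4) that finalized_chain_mono[of "global_view sent r" _ "all_msgs sent"]
      unfolding outputs_finalized_def global_view_def all_msgs_def by blast
    ultimately show False
      using finalized_chains_not_conflicting[OF unslashable] by blast
  qed
  then show ?thesis
    using ffg_voting_rule_not_slashable[OF assms(3)]
    unfolding accountable_def third_slashable_def by blast
qed

end
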